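(* Let $M_N$ satisfy Hypothesis (H) with parameter $(c,c')$ and let $\mathbf m=(m_\sigma)_{\sigma\in\mathfrak S_{2k}}$ in $(\mathcal A,\mathbb C\mathfrak S_k,\mathcal E)$ be the limit given by Theorem MainTh1, realized so that moreover $u_\eta m_\sigma u_{\eta'}^*=m_{(\eta\sqcup\eta')\sigma}$ in $\mathcal A$ for all $\sigma,\eta,\eta'$. Let $\phi(a)$ denote the coefficient of $u_{\mathrm{id}}$ in $\mathcal E(a)$. Set $$s_1=\frac{1}{\sqrt{(2k)!k!c}}\sum_{\sigma}m_\sigma,\quad s_2=\frac{1}{\sqrt{(2k)!k!c}}\sum_\sigma\mathrm{sg}(\sigma)m_\sigma,\quad s_3=\frac{1}{\sqrt{2(2k)!k!(c+\Re c')}}\sum_\sigma(m_\sigma+m_\sigma^* ),$$ the last one assuming $c+\Re c'>0$ (sums over $\sigma\in\mathfrak S_{2k}$, $\mathrm{sg}$ the signature). Then for every $\eta\in\mathfrak S_k$, $$\mathcal E(s_1u_\eta s_1^* )=\mathcal E(s_1^*u_\eta s_1)=\mathcal E(s_3u_\eta s_3)=\frac1{k!}\sum_{\eta'\in\mathfrak S_k}u_{\eta'},$$ $$\mathcal E(s_2u_\eta s_2^* )=\mathcal E(s_2^*u_\eta s_2)=\frac{\mathrm{sg}(\eta)}{k!}\sum_{\eta'\in\mathfrak S_k}\mathrm{sg}(\eta')u_{\eta'}.$$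
   Context: Fix $k\ge1$; $[n]=\{1,\dots,n\}$; $\mathfrak S_n$ is the symmetric group on $[n]$. Flattening: $M_{N,\sigma}((i_1,\dots,i_k),(i_{k+1},\dots,i_{2k}))=M_N(i_{\sigma(1)},\dots,i_{\sigma(2k)})$. Hypothesis (H) with parameter $(c,c')$: for each $N$ the entries of $M_N$ are i.i.d., distributed as a centered complex random variable $m_N$ with finite moments of all orders, and $N^k\mathbb E|m_N|^2\to c>0$, $N^k\mathbb E[m_N^2]\to c'\in\mathbb C$, and $N^k\mathbb E[m_N^{\ell_1}\overline{m_N}^{\ell_2}]\to0$ whenever $\ell_1+\ell_2>2$. $\mathbb C\mathfrak S_k$: group algebra with basis $(u_\eta)$, $u_\eta u_{\eta'}=u_{\eta\eta'}$, $u_\eta^*=u_{\eta^{-1}}$. $(\mathcal A,\mathbb C\mathfrak S_k,\mathcal E)$: unital $*$-algebra containing $\mathbb C\mathfrak S_k$, with $\mathcal E:\mathcal A\to\mathbb C\mathfrak S_k$ unital, completely positive, $\mathcal E(bab')=b\mathcal E(a)b'$. For $\eta,\eta'\in\mathfrak S_k$, $\eta\sqcup\eta'\in\mathfrak S_{2k}$ is $i\mapsto\eta(i)$ for $i\in[k]$, $i\mapsto\eta'(i-k)+k$ otherwise; $\tau\in\mathfrak S_{2k}$ swaps $i\leftrightarrow i+k$. Theorem MainTh1 provides a centered $\mathfrak S_k$-circular family $(m_\sigma)$, limit in $\mathfrak S_k^*$-distribution of the flattenings, with $\mathcal E(m_\sigma u_\eta m_{\sigma'}^* )=c\,u_{\eta'}$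 if $\sigma=(\eta'\sqcup\eta)\sigma'$ and $0$ if no such $\eta'$ exists; $\mathcal E(m_\sigma^*u_\eta m_{\sigma'})=c\,u_{\eta'}$ if $\sigma=(\eta\sqcup\eta')\sigma'$, else $0$; $\mathcal E(m_\sigma u_\eta m_{\sigma'})=c'u_{\eta'}$ if $\sigma=\tau(\eta\sqcup\eta')\sigma'$, else $0$. *)

theory Defs
  imports Complex_Main "HOL-Combinatorics.Permutations" "HOL-Library.Function_Algebras"
begin

text \<open>Permutations of [n] = {1..n} as functions nat => nat (identity outside [n]).\<close>
definition perms :: "nat \<Rightarrow> (nat \<Rightarrow> nat) set" where
  "perms n = {p. p permutes {1..n}}"

definition pjoin :: "nat \<Rightarrow> (nat \<Rightarrow> nat) \<Rightarrow> (nat \<Rightarrow> nat) \<Rightarrow> (nat \<Rightarrow> nat)" where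
  "pjoin k \<eta> \<eta>' = (\<lambda>i. if i \<in> {1..k} then \<eta> i
                        else if i \<in> {k+1..2*k} then \<eta>' (i - k) + k else i)"

definition ptau :: "nat \<Rightarrow> (nat \<Rightarrow> nat)" where
  "ptau k = (\<lambda>i. if i \<in> {1..k} then i + k else if i \<in> {k+1..2*k} then i - k else i)"

text \<open>Elements of the group algebra C S_k, represented by their coefficient functions
  (coefficient of u_eta at eta), supported on perms k.\<close>
type_synonym galg = "(nat \<Rightarrow> nat) \<Rightarrow> complex"

definition ga_supp :: "nat \<Rightarrow> galg \<Rightarrow> bool" where
  "ga_supp k f \<longleftrightarrow> (\<forall>\<eta>. \<eta> \<notin> perms k \<longrightarrow> f \<eta> = 0)"

definition ga_basis :: "nat \<Rightarrow> (nat \<Rightarrow> nat) \<Rightarrow> galg" where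
  "ga_basis k \<eta> = (\<lambda>\<eta>'. if \<eta>' = \<eta> \<and> \<eta> \<in> perms k then 1 else 0)"

text \<open>product: u_a u_b = u_(a o b)\<close>
definition ga_mult :: "nat \<Rightarrow> galg \<Rightarrow> galg \<Rightarrow> galg" where
  "ga_mult k f g = (\<lambda>\<eta>. if \<eta> \<in> perms k then (\<Sum>a\<in>perms k. f a * g (inv a \<circ> \<eta>)) else 0)"

definition ga_star :: "nat \<Rightarrow> galg \<Rightarrow> galg" where
  "ga_star k f = (\<lambda>\<eta>. if \<eta> \<in> perms k then cnj (f (inv \<eta>)) else 0)"

definition ga_scale :: "complex \<Rightarrow> galg \<Rightarrow> galg" where
  "ga_scale a f = (\<lambda>\<eta>. a * f \<eta>)"

text \<open>positive elements of the finite-dimensional C*-algebra C S_k: finite sums of y^* y\<close>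
definition ga_pos :: "nat \<Rightarrow> galg \<Rightarrow> bool" where
  "ga_pos k x \<longleftrightarrow> (\<exists>ys. x = sum_list (map (\<lambda>y. ga_mult k (ga_star k y) y) ys))"

definition star_algebra :: "(complex \<Rightarrow> 'a::ring_1 \<Rightarrow> 'a) \<Rightarrow> ('a \<Rightarrow> 'a) \<Rightarrow> bool" where
  "star_algebra scC st \<longleftrightarrow>
     (\<forall>a x y. scC a (x + y) = scC a x + scC a y) \<and>
     (\<forall>a b x. scC (a + b) x = scC a x + scC b x) \<and>
     (\<forall>a b x. scC (a * b) x = scC a (scC b x)) \<and>
     (\<forall>x. scC 1 x = x) \<and>
     (\<forall>a x y. scC a (x * y) = scC a x * y \<and> scC a (x * y) = x * scC a y) \<and>
     (\<forall>x y. st (x + y) = st x + st y) \<and>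
     (\<forall>a x. st (scC a x) = scC (cnj a) (st x)) \<and>
     (\<forall>x y. st (x * y) = st y * st x) \<and>
     (\<forall>x. st (st x) = x)"

definition ga_emb :: "nat \<Rightarrow> (complex \<Rightarrow> 'a::ring_1 \<Rightarrow> 'a) \<Rightarrow> ((nat \<Rightarrow> nat) \<Rightarrow> 'a) \<Rightarrow> galg \<Rightarrow> 'a" where
  "ga_emb k scC u g = (\<Sum>\<eta>\<in>perms k. scC (g \<eta>) (u \<eta>))"

definition contains_group_algebra ::
  "nat \<Rightarrow> (complex \<Rightarrow> 'a::ring_1 \<Rightarrow> 'a) \<Rightarrow> ('a \<Rightarrow> 'a) \<Rightarrow> ((nat \<Rightarrow> nat) \<Rightarrow> 'a) \<Rightarrow> bool" where
  "contains_group_algebra k scC st u \<longleftrightarrow>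
     u id = 1 \<and>
     (\<forall>\<eta>\<in>perms k. \<forall>\<eta>'\<in>perms k. u (\<eta> \<circ> \<eta>') = u \<eta> * u \<eta>') \<and>
     (\<forall>\<eta>\<in>perms k. st (u \<eta>) = u (inv \<eta>)) \<and>
     (\<forall>g. ga_supp k g \<longrightarrow> ga_emb k scC u g = 0 \<longrightarrow> g = (\<lambda>_. 0))"

text \<open>Complete positivity (into the C*-algebra C S_k) in the standard form:
  sum_{i,j} b_i^* E(a_i^* a_j) b_j >= 0 for all finite families.\<close>
definition cond_exp ::
  "nat \<Rightarrow> (complex \<Rightarrow> 'a::ring_1 \<Rightarrow> 'a) \<Rightarrow> ('a \<Rightarrow> 'a) \<Rightarrow> ((nat \<Rightarrow> nat) \<Rightarrow> 'a) \<Rightarrow> ('a \<Rightarrow> galg) \<Rightarrow> bool" where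
  "cond_exp k scC st u E \<longleftrightarrow>
     (\<forall>x. ga_supp k (E x)) \<and>
     (\<forall>x y. E (x + y) = E x + E y) \<and>
     (\<forall>a x. E (scC a x) = ga_scale a (E x)) \<and>
     E 1 = ga_basis k id \<and>
     (\<forall>g g' x. ga_supp k g \<longrightarrow> ga_supp k g' \<longrightarrow>
        E (ga_emb k scC u g * x * ga_emb k scC u g') = ga_mult k (ga_mult k g (E x)) g') \<and>
     (\<forall>(n::nat) (as::nat \<Rightarrow> 'a) (bs::nat \<Rightarrow> galg). (\<forall>i. ga_supp k (bs i)) \<longrightarrow>
        ga_pos k (\<Sum>i<n. \<Sum>j<n. ga_mult k (ga_mult k (ga_star k (bs i)) (E (st (as i) * as j))) (bs j)))"

end

theory Submission
  imports Defs
begin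

(* Expanding the products bilinearly turns E(s u_eta s'^* ) into a double sum over sigma, sigma'
   in S_2k of the covariances of Theorem MainTh1.  For fixed sigma' only the k! permutations
   sigma = (eta' |_| eta) sigma' contribute, one for each eta' in S_k, with value c u_eta'; the
   weights of s1 and s2 are characters chi of S_2k with chi(sigma)^2 = 1, so the weight of such a
   pair is chi(eta' |_| eta) = chi(eta') chi(eta).  Summing over the (2k)! choices of sigma' and
   normalizing gives the claim.  For s3 the four terms m m, m m^*, m^* m, m^* m^* contribute
   c', c, c and cnj c'; the last one because a completely positive map preserves adjoints. *)

section \<open>Permutations\<close>

lemma finite_perms: "finite (perms n)"
  unfolding perms_def by (simp add: finite_permutations)

lemma card_perms: "card (perms n) = fact n"
  unfolding perms_def by (simp add: card_permutations)

lemma id_in_perms: "id \<in> perms n"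
  by (simp add: perms_def)

lemma comp_in_perms: "a \<in> perms n \<Longrightarrow> b \<in> perms n \<Longrightarrow> a \<circ> b \<in> perms n"
  by (simp add: perms_def permutes_compose)

lemma inv_in_perms: "\<eta> \<in> perms n \<Longrightarrow> inv \<eta> \<in> perms n"
  by (simp add: perms_def permutes_inv)

lemma inv_inv_perms: "\<eta> \<in> perms n \<Longrightarrow> inv (inv \<eta>) = \<eta>"
  by (simp add: perms_def permutes_inv_inv)

lemma perms_inv_cancel:
  assumes "\<eta> \<in> perms n"
  shows "\<eta> \<circ> (inv \<eta> \<circ> b) = b" "inv \<eta> \<circ> (\<eta> \<circ> b) = b"
  using assms by (simp_all add: o_assoc perms_def permutes_inv_o)

lemma perms_comp_right_cancel: "\<sigma> \<in> perms n \<Longrightarrow> f \<circ> \<sigma> = g \<circ> \<sigma> \<longleftrightarrow> f = g"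
  by (metis comp_id o_assoc perms_def mem_Collect_eq permutes_inv_o(1))

lemma perms_mono: "m \<le> n \<Longrightarrow> perms m \<subseteq> perms n"
  unfolding perms_def by (auto intro: permutes_subset)

lemma permutation_of_perms: "\<eta> \<in> perms n \<Longrightarrow> permutation \<eta>"
  unfolding perms_def using permutation_permutes by blast

lemma ptau_ptau [simp]: "ptau k (ptau k i) = i"
  by (auto simp: ptau_def)

lemma ptau_in_perms: "ptau k \<in> perms (2*k)"
  unfolding perms_def permutes_def mem_Collect_eq
proof (intro conjI allI impI)
  show "ptau k x = x" if "x \<notin> {1..2*k}" for x
    using that by (auto simp: ptau_def)
  show "\<exists>!x. ptau k x = y" for y
    by (metis ptau_ptau)
qed

lemma pjoin_eq_conj:
  assumes "\<eta>' \<in> perms k" "\<eta> \<in> perms k"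
  shows "pjoin k \<eta>' \<eta> = \<eta>' \<circ> ptau k \<circ> \<eta> \<circ> ptau k"
proof
  fix i
  have fix_out: "\<eta> j = j" "\<eta>' j = j" if "j \<notin> {1..k}" for j
    using assms that by (simp_all add: perms_def permutes_not_in)
  have "\<eta> (i - k) \<in> {1..k}" if "i \<in> {k+1..2*k}"
  proof -
    from that have "i - k \<in> {1..k}" by auto
    with assms(2) show ?thesis unfolding perms_def by (blast intro: permutes_in_image[THEN iffD2])
  qed
  then show "pjoin k \<eta>' \<eta> i = (\<eta>' \<circ> ptau k \<circ> \<eta> \<circ> ptau k) i"
    by (auto simp: pjoin_def ptau_def fix_out)
qed

lemma pjoin_in_perms: "\<eta>' \<in> perms k \<Longrightarrow> \<eta> \<in> perms k \<Longrightarrow> pjoin k \<eta>' \<eta> \<in> perms (2*k)"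
  using perms_mono[of k "2*k"]
  by (auto simp: pjoin_eq_conj intro!: comp_in_perms ptau_in_perms)

lemma inj_on_pjoin_left: "inj_on (\<lambda>\<eta>'. pjoin k \<eta>' \<eta>) (perms k)"
proof (rule inj_onI, rule ext)
  fix a b i assume a: "a \<in> perms k" and b: "b \<in> perms k"
    and eq: "pjoin k a \<eta> = pjoin k b \<eta>"
  show "a i = b i"
  proof (cases "i \<in> {1..k}")
    case True
    then show ?thesis using fun_cong[OF eq, of i] by (simp add: pjoin_def)
  qed (use a b in \<open>simp add: perms_def permutes_not_in\<close>)
qed

lemma inj_on_pjoin_right: "inj_on (pjoin k \<eta>) (perms k)"
proof (rule inj_onI, rule ext)
  fix a b i assume a: "a \<in> perms k" and b: "b \<in> perms k"
    and eq: "pjoin k \<eta> a = pjoin k \<eta> b"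
  show "a i = b i"
  proof (cases "i \<in> {1..k}")
    case True
    then show ?thesis using fun_cong[OF eq, of "i + k"] by (simp add: pjoin_def)
  qed (use a b in \<open>simp add: perms_def permutes_not_in\<close>)
qed

lemma inj_on_ptau_pjoin_right: "inj_on (\<lambda>\<eta>'. ptau k \<circ> pjoin k \<eta> \<eta>') (perms k)"
proof (rule inj_onI)
  fix a b assume "a \<in> perms k" "b \<in> perms k" "ptau k \<circ> pjoin k \<eta> a = ptau k \<circ> pjoin k \<eta> b"
  moreover from this(3) have "pjoin k \<eta> a = pjoin k \<eta> b"
    by (metis (no_types, lifting) comp_apply ext ptau_ptau)
  ultimately show "a = b" using inj_on_pjoin_right by (metis inj_onD)
qed

definition sign_character :: "nat \<Rightarrow> ((nat \<Rightarrow> nat) \<Rightarrow> int) \<Rightarrow> bool" where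
  "sign_character n \<chi> \<longleftrightarrow>
     (\<forall>a\<in>perms n. \<forall>b\<in>perms n. \<chi> (a \<circ> b) = \<chi> a * \<chi> b) \<and> (\<forall>a\<in>perms n. \<chi> a * \<chi> a = 1)"

lemma sign_character_one: "sign_character n (\<lambda>_. 1)"
  by (simp add: sign_character_def)

lemma sign_character_sign: "sign_character n sign"
  by (simp add: sign_character_def sign_compose permutation_of_perms)

lemma sign_character_pjoin:
  assumes \<chi>: "sign_character (2*k) \<chi>" and "\<eta>' \<in> perms k" "\<eta> \<in> perms k"
  shows "\<chi> (pjoin k \<eta>' \<eta>) = \<chi> \<eta>' * \<chi> \<eta>"
proof -
  have in2k: "\<eta>' \<in> perms (2*k)" "\<eta> \<in> perms (2*k)"
    using assms(2,3) perms_mono[of k "2*k"] by auto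
  have "\<chi> (\<eta>' \<circ> ptau k \<circ> \<eta> \<circ> ptau k) = \<chi> \<eta>' * \<chi> \<eta> * (\<chi> (ptau k) * \<chi> (ptau k))"
    using \<chi> in2k ptau_in_perms
    by (simp add: sign_character_def comp_in_perms ac_simps)
  then show ?thesis
    using \<chi> ptau_in_perms by (simp add: pjoin_eq_conj assms(2,3) sign_character_def)
qed

section \<open>The group algebra\<close>

lemma sum_fun_apply: "(sum f A) x = (\<Sum>a\<in>A. f a x)"
  by (induction A rule: infinite_finite_induct) auto

lemma sum_supported_on_image:
  assumes "finite B" "inj_on g A" "g ` A \<subseteq> B" "\<And>b. b \<in> B - g ` A \<Longrightarrow> F b = 0"
  shows "sum F B = (\<Sum>x\<in>A. F (g x))"
proof -
  have "sum F B = sum F (g ` A)"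
    using assms by (intro sum.mono_neutral_right) auto
  also have "\<dots> = (\<Sum>x\<in>A. F (g x))"
    using assms(2) by (simp add: sum.reindex)
  finally show ?thesis .
qed

lemma ga_scale_scale: "ga_scale a (ga_scale b f) = ga_scale (a * b) f"
  by (simp add: ga_scale_def mult.assoc)

lemma ga_scale_sum: "ga_scale a (sum f A) = (\<Sum>x\<in>A. ga_scale a (f x))"
  by (simp add: ga_scale_def sum_fun_apply sum_distrib_left fun_eq_iff)

lemma sum_const_ga_scale: "(\<Sum>x\<in>A. f) = ga_scale (of_nat (card A)) f"
  by (simp add: ga_scale_def sum_fun_apply fun_eq_iff)

lemma ga_basis_expansion:
  "(\<Sum>\<eta>'\<in>perms k. ga_scale (\<gamma> \<eta>') (ga_basis k \<eta>')) = (\<lambda>\<xi>. if \<xi> \<in> perms k then \<gamma> \<xi> else 0)"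
  by (rule ext) (simp add: sum_fun_apply ga_scale_def ga_basis_def finite_perms if_distrib
      cong: if_cong)

lemma ga_star_expansion:
  "ga_star k (\<Sum>\<eta>'\<in>perms k. ga_scale (\<gamma> \<eta>') (ga_basis k \<eta>'))
     = (\<Sum>\<eta>'\<in>perms k. ga_scale (cnj (\<gamma> (inv \<eta>'))) (ga_basis k \<eta>'))"
  by (rule ext) (simp add: ga_basis_expansion ga_star_def inv_in_perms)

definition ga_selfadjoint :: "nat \<Rightarrow> galg \<Rightarrow> bool" where
  "ga_selfadjoint k X \<longleftrightarrow> (\<forall>\<eta>\<in>perms k. cnj (X (inv \<eta>)) = X \<eta>)"

lemma ga_selfadjoint_star_mult: "ga_selfadjoint k (ga_mult k (ga_star k y) y)"
  unfolding ga_selfadjoint_def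
proof
  fix \<eta> assume \<eta>: "\<eta> \<in> perms k"
  have inv_\<eta>: "inv \<eta> \<in> perms k" using \<eta> by (rule inv_in_perms)
  have "ga_mult k (ga_star k y) y \<eta> = (\<Sum>b\<in>perms k. cnj (y (inv b)) * y (inv b \<circ> \<eta>))"
    using \<eta> by (simp add: ga_mult_def ga_star_def)
  also have "\<dots> = (\<Sum>a\<in>perms k. cnj (y (inv (\<eta> \<circ> a))) * y (inv (\<eta> \<circ> a) \<circ> \<eta>))"
    using \<eta> inv_\<eta>
    by (intro sum.reindex_bij_witness[of _ "\<lambda>a. \<eta> \<circ> a" "\<lambda>b. inv \<eta> \<circ> b"])
       (auto simp: comp_in_perms perms_inv_cancel)
  also have "\<dots> = (\<Sum>a\<in>perms k. cnj (y (inv a \<circ> inv \<eta>)) * y (inv a))"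
  proof (rule sum.cong)
    fix a assume a: "a \<in> perms k"
    have "inv (\<eta> \<circ> a) = inv a \<circ> inv \<eta>"
      using a \<eta> by (simp add: o_inv_distrib perms_def permutes_bij)
    moreover have "inv a \<circ> inv \<eta> \<circ> \<eta> = inv a"
      using \<eta> by (simp add: o_assoc[symmetric] perms_def permutes_inv_o)
    ultimately show "cnj (y (inv (\<eta> \<circ> a))) * y (inv (\<eta> \<circ> a) \<circ> \<eta>)
        = cnj (y (inv a \<circ> inv \<eta>)) * y (inv a)"
      by simp
  qed simp
  also have "\<dots> = cnj (ga_mult k (ga_star k y) y (inv \<eta>))"
    using inv_\<eta> by (simp add: ga_mult_def ga_star_def mult.commute)
  finally show "cnj (ga_mult k (ga_star k y) y (inv \<eta>)) = ga_mult k (ga_star k y) y \<eta>" ..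
qed

lemma ga_selfadjoint_if_pos: "ga_pos k X \<Longrightarrow> ga_selfadjoint k X"
proof -
  have "ga_selfadjoint k (sum_list (map (\<lambda>y. ga_mult k (ga_star k y) y) ys))" for ys
    using ga_selfadjoint_star_mult
    by (induction ys) (auto simp: ga_selfadjoint_def)
  then show "ga_pos k X \<Longrightarrow> ga_selfadjoint k X" by (auto simp: ga_pos_def)
qed

lemma ga_mult_basis_id_left:
  assumes "ga_supp k X"
  shows "ga_mult k (ga_basis k id) X = X"
proof
  fix \<eta>
  have "(\<Sum>a\<in>perms k. ga_basis k id a * X (inv a \<circ> \<eta>))
      = (\<Sum>a\<in>perms k. if a = id then X \<eta> else 0)"
    by (rule sum.cong) (auto simp: ga_basis_def id_in_perms)
  also have "\<dots> = X \<eta>"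
    by (simp add: id_in_perms finite_perms)
  finally show "ga_mult k (ga_basis k id) X \<eta> = X \<eta>"
    using assms
    by (auto simp: ga_mult_def ga_supp_def)
qed

lemma ga_mult_basis_id_right:
  assumes "ga_supp k X"
  shows "ga_mult k X (ga_basis k id) = X"
proof
  fix \<eta>
  have "(\<Sum>a\<in>perms k. X a * ga_basis k id (inv a \<circ> \<eta>)) = X \<eta>" if \<eta>: "\<eta> \<in> perms k"
  proof -
    have "inv a \<circ> \<eta> = id \<longleftrightarrow> a = \<eta>" if "a \<in> perms k" for a
      using perms_inv_cancel[OF that, of \<eta>] perms_inv_cancel[OF that, of id] by auto
    then have "(\<Sum>a\<in>perms k. X a * ga_basis k id (inv a \<circ> \<eta>))
        = (\<Sum>a\<in>perms k. if a = \<eta> then X \<eta> else 0)"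
      by (intro sum.cong) (auto simp: ga_basis_def id_in_perms)
    also have "\<dots> = X \<eta>"
      using \<eta> by (simp add: finite_perms)
    finally show ?thesis .
  qed
  with assms show "ga_mult k X (ga_basis k id) \<eta> = X \<eta>"
    by (auto simp: ga_mult_def ga_supp_def)
qed

section \<open>Star algebras and completely positive conditional expectations\<close>

context
  fixes scC :: "complex \<Rightarrow> 'a::ring_1 \<Rightarrow> 'a" and st :: "'a \<Rightarrow> 'a"
  assumes alg: "star_algebra scC st"
begin

lemma scC_add: "scC a (x + y) = scC a x + scC a y"
  using alg by (simp add: star_algebra_def)

lemma scC_scC: "scC a (scC b x) = scC (a * b) x"
  using alg by (simp add: star_algebra_def)

lemma scC_one: "scC 1 x = x"
  using alg by (simp add: star_algebra_def)

lemma scC_mult_left: "scC a x * y = scC a (x * y)"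
  using alg by (simp add: star_algebra_def)

lemma scC_mult_right: "x * scC a y = scC a (x * y)"
  using alg unfolding star_algebra_def by metis

lemma st_add: "st (x + y) = st x + st y"
  using alg by (simp add: star_algebra_def)

lemma st_scC: "st (scC a x) = scC (cnj a) (st x)"
  using alg by (simp add: star_algebra_def)

lemma st_mult: "st (x * y) = st y * st x"
  using alg by (simp add: star_algebra_def)

lemma st_st: "st (st x) = x"
  using alg by (simp add: star_algebra_def)

lemma st_one: "st 1 = 1"
  by (metis mult_1_right st_mult st_st)

lemma st_zero: "st 0 = 0"
  using st_add[of 0 0] by simp

lemma st_sum: "st (sum f A) = (\<Sum>x\<in>A. st (f x))"
  by (induction A rule: infinite_finite_induct) (auto simp: st_add st_zero)

lemma scC_mult_scC: "scC a x * w * scC b y = scC (a * b) (x * w * y)"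
  by (simp add: scC_mult_left scC_mult_right scC_scC mult.commute)

lemma sum_mult_sum:
  "(\<Sum>\<sigma>\<in>A. scC (\<alpha> \<sigma>) (f \<sigma>)) * w * (\<Sum>\<sigma>'\<in>B. scC (\<beta> \<sigma>') (g \<sigma>'))
     = (\<Sum>\<sigma>\<in>A. \<Sum>\<sigma>'\<in>B. scC (\<alpha> \<sigma> * \<beta> \<sigma>') (f \<sigma> * w * g \<sigma>'))"
  by (simp add: sum_distrib_left sum_distrib_right scC_mult_scC) (rule sum.swap)

lemma st_real_weighted_sum:
  "st (\<Sum>\<sigma>\<in>A. scC (of_int (\<chi> \<sigma>)) (f \<sigma>)) = (\<Sum>\<sigma>\<in>A. scC (of_int (\<chi> \<sigma>)) (st (f \<sigma>)))"
  by (simp add: st_sum st_scC)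

end

context
  fixes k and scC :: "complex \<Rightarrow> 'a::ring_1 \<Rightarrow> 'a" and st :: "'a \<Rightarrow> 'a"
    and u :: "(nat \<Rightarrow> nat) \<Rightarrow> 'a" and E :: "'a \<Rightarrow> galg"
  assumes E: "cond_exp k scC st u E"
begin

lemma E_add: "E (x + y) = E x + E y"
  using E by (simp add: cond_exp_def)

lemma E_scC: "E (scC a x) = ga_scale a (E x)"
  using E by (simp add: cond_exp_def)

lemma E_supp: "ga_supp k (E x)"
  using E by (simp add: cond_exp_def)

lemma E_zero: "E 0 = 0"
  using E_add[of 0 0] by simp

lemma E_sum: "E (sum f A) = (\<Sum>x\<in>A. E (f x))"
  by (induction A rule: infinite_finite_induct) (auto simp: E_add E_zero)

lemma E_completely_positive:
  fixes n :: nat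
  assumes "\<And>i. ga_supp k (bs i)"
  shows "ga_pos k (\<Sum>i<n. \<Sum>j<n. ga_mult k (ga_mult k (ga_star k (bs i)) (E (st (as i) * as j))) (bs j))"
  using E assms unfolding cond_exp_def by blast

lemma E_star_mult_self_selfadjoint: "ga_selfadjoint k (E (st a * a))"
proof -
  have unit_supp: "ga_supp k (ga_basis k id)"
    by (simp add: ga_supp_def ga_basis_def)
  have star_unit: "ga_star k (ga_basis k id) = ga_basis k id"
    by (rule ext) (auto simp: ga_star_def ga_basis_def id_in_perms perms_def,
        metis inv_id permutes_inv_inv)
  have "ga_pos k (\<Sum>i<Suc 0. \<Sum>j<Suc 0. ga_mult k (ga_mult k (ga_star k (ga_basis k id))
      (E (st a * a))) (ga_basis k id))"
    using E_completely_positive[where bs = "\<lambda>_. ga_basis k id" and n = "Suc 0" and as = "\<lambda>_. a"]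
      unit_supp
    by blast
  then have "ga_pos k (E (st a * a))"
    by (simp add: star_unit ga_mult_basis_id_left ga_mult_basis_id_right unit_supp E_supp)
  then show ?thesis
    by (rule ga_selfadjoint_if_pos)
qed

text \<open>A completely positive map is \<open>*\<close>-preserving: polarize the selfadjointness of
  \<open>E((1 + t x)\<^sup>* (1 + t x))\<close> at \<open>t = 1\<close> and \<open>t = \<i>\<close>.\<close>
lemma E_st:
  assumes alg: "star_algebra scC st"
  shows "E (st x) = ga_star k (E x)"
proof
  fix \<eta>
  show "E (st x) \<eta> = ga_star k (E x) \<eta>"
  proof (cases "\<eta> \<in> perms k")
    case False
    then show ?thesis using E_supp by (simp add: ga_supp_def ga_star_def)
  next
    case \<eta>: True
    define A B where "A = E x" and "B = E (st x)"
    have polar: "cnj (t * A (inv \<eta>) + cnj t * B (inv \<eta>)) = t * A \<eta> + cnj t * B \<eta>" for t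
    proof -
      have expand: "st (1 + scC t x) * (1 + scC t x)
          = 1 + scC t x + scC (cnj t) (st x) + scC (cnj t * t) (st x * x)"
        by (simp add: st_add[OF alg] st_one[OF alg] st_scC[OF alg] scC_mult_scC[OF alg,
              of _ _ 1, simplified] algebra_simps)
      have "ga_selfadjoint k (E 1)"
        using E_star_mult_self_selfadjoint[of 1] by (simp add: st_one[OF alg])
      then show ?thesis
        using E_star_mult_self_selfadjoint[of x] E_star_mult_self_selfadjoint[of "1 + scC t x"] \<eta>
        unfolding expand
        by (simp add: ga_selfadjoint_def E_add E_scC ga_scale_def A_def B_def)
    qed
    have sum: "cnj (A (inv \<eta>)) + cnj (B (inv \<eta>)) = A \<eta> + B \<eta>"
      using polar[of 1] by simp
    have "\<i> * (cnj (B (inv \<eta>)) - cnj (A (inv \<eta>))) = \<i> * (A \<eta> - B \<eta>)"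
      using polar[of \<i>] by (simp add: algebra_simps)
    then have diff: "cnj (B (inv \<eta>)) - cnj (A (inv \<eta>)) = A \<eta> - B \<eta>"
      by simp
    have "2 * cnj (A (inv \<eta>)) = 2 * B \<eta>"
      using arg_cong2[OF sum diff, of "(-)"] by (simp add: algebra_simps)
    then have "B \<eta> = cnj (A (inv \<eta>))"
      by simp
    with \<eta> show ?thesis by (simp add: A_def B_def ga_star_def)
  qed
qed

lemma E_scC_mult_scC:
  assumes alg: "star_algebra scC st"
  shows "E (scC a x * w * scC b y) = ga_scale (a * b) (E (x * w * y))"
  by (simp add: scC_mult_scC[OF alg] E_scC)

lemma E_double_sum:
  assumes alg: "star_algebra scC st"
  shows "E ((\<Sum>\<sigma>\<in>A. scC (\<alpha> \<sigma>) (f \<sigma>)) * w * (\<Sum>\<sigma>'\<in>B. scC (\<beta> \<sigma>') (g \<sigma>')))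
     = (\<Sum>\<sigma>\<in>A. \<Sum>\<sigma>'\<in>B. ga_scale (\<alpha> \<sigma> * \<beta> \<sigma>') (E (f \<sigma> * w * g \<sigma>')))"
  by (simp add: sum_mult_sum[OF alg] E_sum E_scC)

end

section \<open>Covariance sums\<close>

text \<open>The common shape of the three covariance formulas of Theorem MainTh1:
  \<open>F \<sigma> \<sigma>' \<eta>\<close> stands for \<open>\<E>(x\<^sub>\<sigma> u\<^sub>\<eta> y\<^sub>\<sigma>\<^sub>')\<close>, which is \<open>\<gamma> u\<^sub>\<eta>\<^sub>'\<close> when \<open>\<sigma> = J \<eta> \<eta>' \<circ> \<sigma>'\<close>
  and vanishes if there is no such \<open>\<eta>'\<close>.\<close>
definition covariance_rule ::
  "nat \<Rightarrow> ((nat \<Rightarrow> nat) \<Rightarrow> (nat \<Rightarrow> nat) \<Rightarrow> (nat \<Rightarrow> nat) \<Rightarrow> galg)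
     \<Rightarrow> ((nat \<Rightarrow> nat) \<Rightarrow> (nat \<Rightarrow> nat) \<Rightarrow> (nat \<Rightarrow> nat)) \<Rightarrow> complex \<Rightarrow> bool" where
  "covariance_rule k F J \<gamma> \<longleftrightarrow>
     (\<forall>\<sigma>\<in>perms (2*k). \<forall>\<sigma>'\<in>perms (2*k). \<forall>\<eta>\<in>perms k.
        (\<forall>\<eta>'\<in>perms k. \<sigma> = J \<eta> \<eta>' \<circ> \<sigma>' \<longrightarrow> F \<sigma> \<sigma>' \<eta> = ga_scale \<gamma> (ga_basis k \<eta>')) \<and>
        ((\<nexists>\<eta>'. \<eta>' \<in> perms k \<and> \<sigma> = J \<eta> \<eta>' \<circ> \<sigma>') \<longrightarrow> F \<sigma> \<sigma>' \<eta> = (\<lambda>_. 0)))"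

lemma covariance_sum_fixed_right:
  assumes cov: "covariance_rule k F J \<gamma>" and \<eta>: "\<eta> \<in> perms k" and \<sigma>': "\<sigma>' \<in> perms (2*k)"
    and J_perms: "J \<eta> ` perms k \<subseteq> perms (2*k)"
    and J_inj: "inj_on (J \<eta>) (perms k)"
    and \<chi>: "sign_character (2*k) \<chi>"
  shows "(\<Sum>\<sigma>\<in>perms (2*k). ga_scale (of_int (\<chi> \<sigma>) * of_int (\<chi> \<sigma>')) (F \<sigma> \<sigma>' \<eta>))
       = (\<Sum>\<eta>'\<in>perms k. ga_scale (\<gamma> * of_int (\<chi> (J \<eta> \<eta>'))) (ga_basis k \<eta>'))"
proof -
  let ?g = "\<lambda>\<eta>'. J \<eta> \<eta>' \<circ> \<sigma>'"
  have "inj_on ?g (perms k)"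
    using J_inj by (simp add: inj_on_def perms_comp_right_cancel[OF \<sigma>'])
  moreover have "?g ` perms k \<subseteq> perms (2*k)"
    using J_perms \<sigma>' by (auto intro: comp_in_perms)
  moreover have "F \<sigma> \<sigma>' \<eta> = (\<lambda>_. 0)" if "\<sigma> \<in> perms (2*k) - ?g ` perms k" for \<sigma>
    using cov that \<sigma>' \<eta> unfolding covariance_rule_def by blast
  ultimately have "(\<Sum>\<sigma>\<in>perms (2*k). ga_scale (of_int (\<chi> \<sigma>) * of_int (\<chi> \<sigma>')) (F \<sigma> \<sigma>' \<eta>))
      = (\<Sum>\<eta>'\<in>perms k. ga_scale (of_int (\<chi> (?g \<eta>')) * of_int (\<chi> \<sigma>')) (F (?g \<eta>') \<sigma>' \<eta>))"
    by (intro sum_supported_on_image[where g = ?g]) (auto simp: finite_perms ga_scale_def)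
  also have "\<dots> = (\<Sum>\<eta>'\<in>perms k. ga_scale (\<gamma> * of_int (\<chi> (J \<eta> \<eta>'))) (ga_basis k \<eta>'))"
  proof (rule sum.cong)
    fix \<eta>' assume \<eta>': "\<eta>' \<in> perms k"
    then have J: "J \<eta> \<eta>' \<in> perms (2*k)" using J_perms by blast
    have "F (?g \<eta>') \<sigma>' \<eta> = ga_scale \<gamma> (ga_basis k \<eta>')"
      using cov J \<sigma>' \<eta> \<eta>' comp_in_perms unfolding covariance_rule_def by blast
    moreover have "\<chi> (?g \<eta>') * \<chi> \<sigma>' = \<chi> (J \<eta> \<eta>')"
      using \<chi> J \<sigma>' by (simp add: sign_character_def mult.assoc)
    ultimately show "ga_scale (of_int (\<chi> (?g \<eta>')) * of_int (\<chi> \<sigma>')) (F (?g \<eta>') \<sigma>' \<eta>)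
        = ga_scale (\<gamma> * of_int (\<chi> (J \<eta> \<eta>'))) (ga_basis k \<eta>')"
      by (simp add: ga_scale_scale mult.commute flip: of_int_mult)
  qed simp
  finally show ?thesis .
qed

lemma covariance_double_sum:
  assumes cov: "covariance_rule k F J \<gamma>" and \<eta>: "\<eta> \<in> perms k"
    and J_perms: "J \<eta> ` perms k \<subseteq> perms (2*k)"
    and J_inj: "inj_on (J \<eta>) (perms k)"
    and \<chi>: "sign_character (2*k) \<chi>"
  shows "(\<Sum>\<sigma>\<in>perms (2*k). \<Sum>\<sigma>'\<in>perms (2*k). ga_scale (of_int (\<chi> \<sigma>) * of_int (\<chi> \<sigma>')) (F \<sigma> \<sigma>' \<eta>))
       = (\<Sum>\<eta>'\<in>perms k. ga_scale (fact (2*k) * \<gamma> * of_int (\<chi> (J \<eta> \<eta>'))) (ga_basis k \<eta>'))"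
proof -
  define G where "G = (\<Sum>\<eta>'\<in>perms k. ga_scale (\<gamma> * of_int (\<chi> (J \<eta> \<eta>'))) (ga_basis k \<eta>'))"
  have inner: "(\<Sum>\<sigma>\<in>perms (2*k). ga_scale (of_int (\<chi> \<sigma>) * of_int (\<chi> \<sigma>')) (F \<sigma> \<sigma>' \<eta>)) = G"
    if "\<sigma>' \<in> perms (2*k)" for \<sigma>'
    unfolding G_def by (rule covariance_sum_fixed_right[OF cov \<eta> that, OF J_perms J_inj \<chi>])
  have "(\<Sum>\<sigma>\<in>perms (2*k). \<Sum>\<sigma>'\<in>perms (2*k). ga_scale (of_int (\<chi> \<sigma>) * of_int (\<chi> \<sigma>')) (F \<sigma> \<sigma>' \<eta>))
      = (\<Sum>\<sigma>'\<in>perms (2*k). G)"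
    by (subst sum.swap) (intro sum.cong refl inner)
  also have "\<dots> = ga_scale (fact (2*k)) G"
    by (simp only: sum_const_ga_scale card_perms of_nat_fact)
  finally show ?thesis
    by (simp add: G_def ga_scale_sum ga_scale_scale mult.assoc)
qed

lemma inverse_sqrt_squared:
  "X > 0 \<Longrightarrow> complex_of_real (1 / sqrt X) * complex_of_real (1 / sqrt X) = 1 / complex_of_real X"
  by (simp flip: of_real_mult add: real_sqrt_mult[symmetric])

lemma normalize_basis_sum:
  assumes "C > 0"
  shows "ga_scale (complex_of_real (1 / sqrt (fact n * fact k * C)) * complex_of_real (1 / sqrt (fact n * fact k * C)))
      (\<Sum>\<eta>'\<in>perms k. ga_scale (fact n * complex_of_real C * \<gamma> \<eta>') (ga_basis k \<eta>'))
    = (\<Sum>\<eta>'\<in>perms k. ga_scale (\<gamma> \<eta>' / fact k) (ga_basis k \<eta>'))"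
proof -
  have "complex_of_real (1 / sqrt (fact n * fact k * C)) * complex_of_real (1 / sqrt (fact n * fact k * C))
      = 1 / (fact n * fact k * C)"
    using assms by (subst inverse_sqrt_squared) simp_all
  then show ?thesis
    using assms by (simp add: ga_scale_sum ga_scale_scale field_simps)
qed

locale circular_limit =
  fixes k :: nat and c :: real and c' :: complex
    and scC :: "complex \<Rightarrow> 'a::ring_1 \<Rightarrow> 'a" and st :: "'a \<Rightarrow> 'a"
    and u :: "(nat \<Rightarrow> nat) \<Rightarrow> 'a" and E :: "'a \<Rightarrow> galg" and m :: "(nat \<Rightarrow> nat) \<Rightarrow> 'a"
  assumes alg: "star_algebra scC st"
    and st_u: "\<eta> \<in> perms k \<Longrightarrow> st (u \<eta>) = u (inv \<eta>)"
    and E: "cond_exp k scC st u E"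
    and c_pos: "c > 0"
    and cov_m_mstar: "covariance_rule k (\<lambda>\<sigma> \<sigma>' \<eta>. E (m \<sigma> * u \<eta> * st (m \<sigma>')))
        (\<lambda>\<eta> \<eta>'. pjoin k \<eta>' \<eta>) (complex_of_real c)"
    and cov_mstar_m: "covariance_rule k (\<lambda>\<sigma> \<sigma>' \<eta>. E (st (m \<sigma>) * u \<eta> * m \<sigma>'))
        (pjoin k) (complex_of_real c)"
    and cov_m_m: "covariance_rule k (\<lambda>\<sigma> \<sigma>' \<eta>. E (m \<sigma> * u \<eta> * m \<sigma>'))
        (\<lambda>\<eta> \<eta>'. ptau k \<circ> pjoin k \<eta> \<eta>') c'"
begin

definition msum :: "((nat \<Rightarrow> nat) \<Rightarrow> int) \<Rightarrow> 'a" where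
  "msum \<chi> = (\<Sum>\<sigma>\<in>perms (2*k). scC (of_int (\<chi> \<sigma>)) (m \<sigma>))"

lemma E_msum_u_msum_star:
  assumes \<eta>: "\<eta> \<in> perms k" and \<chi>: "sign_character (2*k) \<chi>"
  shows "E (msum \<chi> * u \<eta> * st (msum \<chi>))
    = (\<Sum>\<eta>'\<in>perms k. ga_scale (fact (2*k) * complex_of_real c * of_int (\<chi> \<eta> * \<chi> \<eta>')) (ga_basis k \<eta>'))"
proof -
  have "E (msum \<chi> * u \<eta> * st (msum \<chi>))
      = (\<Sum>\<eta>'\<in>perms k. ga_scale (fact (2*k) * complex_of_real c * of_int (\<chi> (pjoin k \<eta>' \<eta>))) (ga_basis k \<eta>'))"
    unfolding msum_def st_real_weighted_sum[OF alg] E_double_sum[OF E alg]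
    using covariance_double_sum[OF cov_m_mstar \<eta> _ _ \<chi>] inj_on_pjoin_left pjoin_in_perms \<eta>
    by (auto simp: image_subset_iff)
  also have "\<dots> = (\<Sum>\<eta>'\<in>perms k. ga_scale (fact (2*k) * complex_of_real c * of_int (\<chi> \<eta> * \<chi> \<eta>')) (ga_basis k \<eta>'))"
    using \<eta> by (intro sum.cong) (simp_all add: sign_character_pjoin[OF \<chi>] mult.commute)
  finally show ?thesis .
qed

lemma E_msum_star_u_msum:
  assumes \<eta>: "\<eta> \<in> perms k" and \<chi>: "sign_character (2*k) \<chi>"
  shows "E (st (msum \<chi>) * u \<eta> * msum \<chi>)
    = (\<Sum>\<eta>'\<in>perms k. ga_scale (fact (2*k) * complex_of_real c * of_int (\<chi> \<eta> * \<chi> \<eta>')) (ga_basis k \<eta>'))"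
proof -
  have "E (st (msum \<chi>) * u \<eta> * msum \<chi>)
      = (\<Sum>\<eta>'\<in>perms k. ga_scale (fact (2*k) * complex_of_real c * of_int (\<chi> (pjoin k \<eta> \<eta>'))) (ga_basis k \<eta>'))"
    unfolding msum_def st_real_weighted_sum[OF alg] E_double_sum[OF E alg]
    using covariance_double_sum[OF cov_mstar_m \<eta> _ _ \<chi>] inj_on_pjoin_right pjoin_in_perms \<eta>
    by (auto simp: image_subset_iff)
  also have "\<dots> = (\<Sum>\<eta>'\<in>perms k. ga_scale (fact (2*k) * complex_of_real c * of_int (\<chi> \<eta> * \<chi> \<eta>')) (ga_basis k \<eta>'))"
    using \<eta> by (intro sum.cong) (simp_all add: sign_character_pjoin[OF \<chi>])
  finally show ?thesis .
qed

lemma E_msum_u_msum: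
  assumes \<eta>: "\<eta> \<in> perms k"
  shows "E (msum (\<lambda>_. 1) * u \<eta> * msum (\<lambda>_. 1))
    = (\<Sum>\<eta>'\<in>perms k. ga_scale (fact (2*k) * c') (ga_basis k \<eta>'))"
  unfolding msum_def E_double_sum[OF E alg]
  using covariance_double_sum[OF cov_m_m \<eta> _ _ sign_character_one] inj_on_ptau_pjoin_right
    pjoin_in_perms comp_in_perms ptau_in_perms \<eta>
  by (auto simp: image_subset_iff)

lemma E_msum_star_u_msum_star:
  assumes \<eta>: "\<eta> \<in> perms k"
  shows "E (st (msum (\<lambda>_. 1)) * u \<eta> * st (msum (\<lambda>_. 1)))
    = (\<Sum>\<eta>'\<in>perms k. ga_scale (fact (2*k) * cnj c') (ga_basis k \<eta>'))"
proof -
  have "st (msum (\<lambda>_. 1)) * u \<eta> * st (msum (\<lambda>_. 1))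
      = st (msum (\<lambda>_. 1) * u (inv \<eta>) * msum (\<lambda>_. 1))"
    using \<eta> by (simp add: st_mult[OF alg] st_u inv_in_perms inv_inv_perms mult.assoc)
  then show ?thesis
    using \<eta> by (simp add: E_st[OF E alg] E_msum_u_msum inv_in_perms ga_star_expansion)
qed

lemma E_normalized_msum_u_msum_star:
  assumes \<eta>: "\<eta> \<in> perms k" and \<chi>: "sign_character (2*k) \<chi>"
  defines "r \<equiv> complex_of_real (1 / sqrt (fact (2*k) * fact k * c))"
  shows "E (scC r (msum \<chi>) * u \<eta> * st (scC r (msum \<chi>)))
    = (\<Sum>\<eta>'\<in>perms k. ga_scale (of_int (\<chi> \<eta> * \<chi> \<eta>') / fact k) (ga_basis k \<eta>'))"
proof -
  have "cnj r = r"
    by (simp add: r_def)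
  then have "E (scC r (msum \<chi>) * u \<eta> * st (scC r (msum \<chi>)))
      = ga_scale (r * r) (E (msum \<chi> * u \<eta> * st (msum \<chi>)))"
    by (simp add: st_scC[OF alg] E_scC_mult_scC[OF E alg])
  also have "\<dots> = (\<Sum>\<eta>'\<in>perms k. ga_scale (of_int (\<chi> \<eta> * \<chi> \<eta>') / fact k) (ga_basis k \<eta>'))"
    unfolding E_msum_u_msum_star[OF \<eta> \<chi>] r_def by (rule normalize_basis_sum[OF c_pos])
  finally show ?thesis .
qed

lemma E_normalized_msum_star_u_msum:
  assumes \<eta>: "\<eta> \<in> perms k" and \<chi>: "sign_character (2*k) \<chi>"
  defines "r \<equiv> complex_of_real (1 / sqrt (fact (2*k) * fact k * c))"
  shows "E (st (scC r (msum \<chi>)) * u \<eta> * scC r (msum \<chi>))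
    = (\<Sum>\<eta>'\<in>perms k. ga_scale (of_int (\<chi> \<eta> * \<chi> \<eta>') / fact k) (ga_basis k \<eta>'))"
proof -
  have "cnj r = r"
    by (simp add: r_def)
  then have "E (st (scC r (msum \<chi>)) * u \<eta> * scC r (msum \<chi>))
      = ga_scale (r * r) (E (st (msum \<chi>) * u \<eta> * msum \<chi>))"
    by (simp add: st_scC[OF alg] E_scC_mult_scC[OF E alg])
  also have "\<dots> = (\<Sum>\<eta>'\<in>perms k. ga_scale (of_int (\<chi> \<eta> * \<chi> \<eta>') / fact k) (ga_basis k \<eta>'))"
    unfolding E_msum_star_u_msum[OF \<eta> \<chi>] r_def by (rule normalize_basis_sum[OF c_pos])
  finally show ?thesis .
qed

lemma E_normalized_hermitian_part:
  assumes \<eta>: "\<eta> \<in> perms k" and pos: "c + Re c' > 0"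
  defines "r \<equiv> complex_of_real (1 / sqrt (2 * fact (2*k) * fact k * (c + Re c')))"
    and "S \<equiv> msum (\<lambda>_. 1)"
  shows "E (scC r (S + st S) * u \<eta> * scC r (S + st S))
    = (\<Sum>\<eta>'\<in>perms k. ga_scale (1 / fact k) (ga_basis k \<eta>'))"
proof -
  have r: "r = complex_of_real (1 / sqrt (fact (2*k) * fact k * (2 * (c + Re c'))))"
    by (simp add: r_def ac_simps)
  have coeff: "c' + complex_of_real c + complex_of_real c + cnj c' = complex_of_real (2 * (c + Re c'))"
    by (simp add: complex_eq_iff)
  have "E ((S + st S) * u \<eta> * (S + st S))
      = E (S * u \<eta> * S) + E (S * u \<eta> * st S) + E (st S * u \<eta> * S) + E (st S * u \<eta> * st S)"
    by (simp add: algebra_simps E_add[OF E])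
  also have "\<dots> = (\<Sum>\<eta>'\<in>perms k.
      ga_scale (fact (2*k) * (c' + complex_of_real c + complex_of_real c + cnj c')) (ga_basis k \<eta>'))"
    unfolding S_def E_msum_u_msum[OF \<eta>] E_msum_star_u_msum_star[OF \<eta>]
      E_msum_u_msum_star[OF \<eta> sign_character_one] E_msum_star_u_msum[OF \<eta> sign_character_one]
    by (rule ext) (simp add: ga_basis_expansion algebra_simps)
  also have "\<dots> = (\<Sum>\<eta>'\<in>perms k. ga_scale (fact (2*k) * complex_of_real (2 * (c + Re c')) * 1) (ga_basis k \<eta>'))"
    unfolding coeff by simp
  finally have "E (scC r (S + st S) * u \<eta> * scC r (S + st S))
      = ga_scale (r * r) (\<Sum>\<eta>'\<in>perms k. ga_scale (fact (2*k) * complex_of_real (2 * (c + Re c')) * 1) (ga_basis k \<eta>'))"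
    by (simp add: E_scC_mult_scC[OF E alg])
  also have "\<dots> = (\<Sum>\<eta>'\<in>perms k. ga_scale (1 / fact k) (ga_basis k \<eta>'))"
    unfolding r by (rule normalize_basis_sum[where \<gamma> = "\<lambda>_. 1"]) (use pos in simp)
  finally show ?thesis .
qed

end

theorem mainTheorem13:
  fixes k :: nat and c :: real and c' :: complex
    and scC :: "complex \<Rightarrow> 'a::ring_1 \<Rightarrow> 'a" and st :: "'a \<Rightarrow> 'a"
    and u :: "(nat \<Rightarrow> nat) \<Rightarrow> 'a" and E :: "'a \<Rightarrow> galg"
    and m :: "(nat \<Rightarrow> nat) \<Rightarrow> 'a"
    and s1 s2 s3 :: 'a
  assumes k: "k \<ge> 1"
    and c_pos: "c > 0"
    and alg: "star_algebra scC st"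
    and contains: "contains_group_algebra k scC st u"
    and E: "cond_exp k scC st u E"
    \<comment> \<open>centered\<close>
    and centered: "\<forall>\<sigma>\<in>perms (2*k). E (m \<sigma>) = (\<lambda>_. 0)"
    \<comment> \<open>covariance of the limit family given by Theorem MainTh1\<close>
    and cov1: "\<forall>\<sigma>\<in>perms (2*k). \<forall>\<sigma>'\<in>perms (2*k). \<forall>\<eta>\<in>perms k.
        (\<forall>\<eta>'\<in>perms k. \<sigma> = pjoin k \<eta>' \<eta> \<circ> \<sigma>' \<longrightarrow>
           E (m \<sigma> * u \<eta> * st (m \<sigma>')) = ga_scale (complex_of_real c) (ga_basis k \<eta>')) \<and>
        ((\<nexists>\<eta>'. \<eta>' \<in> perms k \<and> \<sigma> = pjoin k \<eta>' \<eta> \<circ> \<sigma>') \<longrightarrow>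
           E (m \<sigma> * u \<eta> * st (m \<sigma>')) = (\<lambda>_. 0))"
    and cov2: "\<forall>\<sigma>\<in>perms (2*k). \<forall>\<sigma>'\<in>perms (2*k). \<forall>\<eta>\<in>perms k.
        (\<forall>\<eta>'\<in>perms k. \<sigma> = pjoin k \<eta> \<eta>' \<circ> \<sigma>' \<longrightarrow>
           E (st (m \<sigma>) * u \<eta> * m \<sigma>') = ga_scale (complex_of_real c) (ga_basis k \<eta>')) \<and>
        ((\<nexists>\<eta>'. \<eta>' \<in> perms k \<and> \<sigma> = pjoin k \<eta> \<eta>' \<circ> \<sigma>') \<longrightarrow>
           E (st (m \<sigma>) * u \<eta> * m \<sigma>') = (\<lambda>_. 0))"
    and cov3: "\<forall>\<sigma>\<in>perms (2*k). \<forall>\<sigma>'\<in>perms (2*k). \<forall>\<eta>\<in>perms k.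
        (\<forall>\<eta>'\<in>perms k. \<sigma> = ptau k \<circ> pjoin k \<eta> \<eta>' \<circ> \<sigma>' \<longrightarrow>
           E (m \<sigma> * u \<eta> * m \<sigma>') = ga_scale c' (ga_basis k \<eta>')) \<and>
        ((\<nexists>\<eta>'. \<eta>' \<in> perms k \<and> \<sigma> = ptau k \<circ> pjoin k \<eta> \<eta>' \<circ> \<sigma>') \<longrightarrow>
           E (m \<sigma> * u \<eta> * m \<sigma>') = (\<lambda>_. 0))"
    \<comment> \<open>the additional equivariance of the realization\<close>
    and equiv: "\<forall>\<sigma>\<in>perms (2*k). \<forall>\<eta>\<in>perms k. \<forall>\<eta>'\<in>perms k.
        u \<eta> * m \<sigma> * st (u \<eta>') = m (pjoin k \<eta> \<eta>' \<circ> \<sigma>)"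
    and s1: "s1 = scC (complex_of_real (1 / sqrt (fact (2*k) * fact k * c)))
                  (\<Sum>\<sigma>\<in>perms (2*k). m \<sigma>)"
    and s2: "s2 = scC (complex_of_real (1 / sqrt (fact (2*k) * fact k * c)))
                  (\<Sum>\<sigma>\<in>perms (2*k). scC (of_int (sign \<sigma>)) (m \<sigma>))"
    and s3: "s3 = scC (complex_of_real (1 / sqrt (2 * fact (2*k) * fact k * (c + Re c'))))
                  (\<Sum>\<sigma>\<in>perms (2*k). m \<sigma> + st (m \<sigma>))"
  shows "\<forall>\<eta>\<in>perms k.
      E (s1 * u \<eta> * st s1) = (\<Sum>\<eta>'\<in>perms k. ga_scale (1 / fact k) (ga_basis k \<eta>')) \<and>
      E (st s1 * u \<eta> * s1) = (\<Sum>\<eta>'\<in>perms k. ga_scale (1 / fact k) (ga_basis k \<eta>')) \<and>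
      (c + Re c' > 0 \<longrightarrow>
         E (s3 * u \<eta> * s3) = (\<Sum>\<eta>'\<in>perms k. ga_scale (1 / fact k) (ga_basis k \<eta>'))) \<and>
      E (s2 * u \<eta> * st s2) =
         (\<Sum>\<eta>'\<in>perms k. ga_scale (of_int (sign \<eta>) * of_int (sign \<eta>') / fact k) (ga_basis k \<eta>')) \<and>
      E (st s2 * u \<eta> * s2) =
         (\<Sum>\<eta>'\<in>perms k. ga_scale (of_int (sign \<eta>) * of_int (sign \<eta>') / fact k) (ga_basis k \<eta>'))"
proof -
  interpret circular_limit k c c' scC st u E m
  proof
    show "st (u \<eta>) = u (inv \<eta>)" if "\<eta> \<in> perms k" for \<eta>
      using contains that by (simp add: contains_group_algebra_def)
  qed (use alg E c_pos cov1 cov2 cov3 in \<open>simp_all add: covariance_rule_def\<close>)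
  have "s1 = scC (complex_of_real (1 / sqrt (fact (2*k) * fact k * c))) (msum (\<lambda>_. 1))"
    and "s2 = scC (complex_of_real (1 / sqrt (fact (2*k) * fact k * c))) (msum sign)"
    and "s3 = scC (complex_of_real (1 / sqrt (2 * fact (2*k) * fact k * (c + Re c'))))
                (msum (\<lambda>_. 1) + st (msum (\<lambda>_. 1)))"
    by (simp_all add: s1 s2 s3 msum_def scC_one[OF alg] st_sum[OF alg] sum.distrib)
  then show ?thesis
    using E_normalized_msum_u_msum_star E_normalized_msum_star_u_msum E_normalized_hermitian_part
      sign_character_one sign_character_sign
    by simp
qed

end
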